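(* The map $\mathbb B_\infty\to\mathbb V_\infty(\overline K)$, $[\mathcal B]\mapsto\omega_{\mathcal B}$, is well defined and bijective.
   Context: $(K,v)$ is a valued field, $\overline K$ an algebraic closure, $\bar v$ a fixed extension of $v$ to $\overline K$ with value group $\Gamma$. Closed balls: $B(a,\gamma)=\{c\in\overline K\mid\bar v(c-a)\ge\gamma\}$ for $a\in\overline K,\gamma\in\Gamma$; $\omega_{B(a,\gamma)}(\sum a_n(x-a)^n)=\min_n\{\bar v(a_n)+n\gamma\}$. $\mathcal N_\infty$ is the set of nests $\mathcal B=(B_i)_{i\in I}$ of closed balls ($I$ totally ordered, $i<j\iff B_i\supsetneq B_j$) with $\bigcap_i B_i=\emptyset$; for such $\mathcal B$, $\omega_{\mathcal B}(f)=\max_i\omega_{B_i}(f)$ for $f\in\overline K[x]$ (the values stabilize). Two nests are equivalent, $\mathcal B\sim\mathcal C$, if they are mutually cofinal (each ball of one contains some ball of the other); $\mathbb B_\infty=\mathcal N_\infty/\sim$. $\mathbb V_\infty(\overline K)$ is the set of valuations $\omega$ on $\overline K(x)$ extending $\bar v$ that are valuation-algebraic: $\Gamma_\omega/\Gamma$ is torsion (so $\Gamma_\omega=\Gamma$ after the canonical identification) and the residue field extension of $\omega$ over that of $\bar v$ is algebraic. *)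

theory Defs
  imports "HOL-Computational_Algebra.Polynomial" "HOL-Computational_Algebra.Fraction_Field"
begin

text \<open>Convention: a valuation is a map into a linearly ordered abelian group 'g;
  its value at 0 (which should be infinity) is the junk value 0.\<close>

primrec nmult :: "nat \<Rightarrow> 'g::linordered_ab_group_add \<Rightarrow> 'g" where
  "nmult 0 g = 0"
| "nmult (Suc n) g = g + nmult n g"

definition is_valuation :: "('b::field \<Rightarrow> 'g::linordered_ab_group_add) \<Rightarrow> bool" where
  "is_valuation w \<longleftrightarrow> w 0 = 0
     \<and> (\<forall>a b. a \<noteq> 0 \<longrightarrow> b \<noteq> 0 \<longrightarrow> w (a * b) = w a + w b)
     \<and> (\<forall>a b. a \<noteq> 0 \<longrightarrow> b \<noteq> 0 \<longrightarrow> a + b \<noteq> 0 \<longrightarrow> min (w a) (w b) \<le> w (a + b))"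

definition value_group :: "('b::field \<Rightarrow> 'g::linordered_ab_group_add) \<Rightarrow> 'g set" where
  "value_group w = w ` (UNIV - {0})"

definition cball_v :: "('a::field \<Rightarrow> 'g::linordered_ab_group_add) \<Rightarrow> 'a \<Rightarrow> 'g \<Rightarrow> 'a set" where
  "cball_v v a \<gamma> = {c. c = a \<or> \<gamma> \<le> v (c - a)}"

definition is_closed_ball :: "('a::field \<Rightarrow> 'g::linordered_ab_group_add) \<Rightarrow> 'a set \<Rightarrow> bool" where
  "is_closed_ball v B \<longleftrightarrow> (\<exists>a \<gamma>. \<gamma> \<in> value_group v \<and> B = cball_v v a \<gamma>)"

definition omega_center :: "('a::field \<Rightarrow> 'g::linordered_ab_group_add) \<Rightarrow> 'a \<Rightarrow> 'g \<Rightarrow> 'a poly \<Rightarrow> 'g" where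
  "omega_center v a \<gamma> f = (if f = 0 then 0 else
     Min {v (coeff (pcompose f [:a, 1:]) n) + nmult n \<gamma> | n. coeff (pcompose f [:a, 1:]) n \<noteq> 0})"

definition omega_ball :: "('a::field \<Rightarrow> 'g::linordered_ab_group_add) \<Rightarrow> 'a set \<Rightarrow> 'a poly \<Rightarrow> 'g" where
  "omega_ball v B f = (SOME w. \<exists>a \<gamma>. \<gamma> \<in> value_group v \<and> B = cball_v v a \<gamma> \<and> w = omega_center v a \<gamma> f)"

text \<open>Nests of closed balls with empty intersection; the index set I is the nest itself,
  ordered by reverse inclusion.\<close>
definition nests_inf :: "('a::field \<Rightarrow> 'g::linordered_ab_group_add) \<Rightarrow> 'a set set set" where
  "nests_inf v = {N. N \<noteq> {} \<and> (\<forall>B\<in>N. is_closed_ball v B)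
     \<and> (\<forall>B\<in>N. \<forall>C\<in>N. B \<subseteq> C \<or> C \<subseteq> B) \<and> \<Inter> N = {}}"

definition nest_equiv :: "('a::field \<Rightarrow> 'g::linordered_ab_group_add) \<Rightarrow> ('a set set \<times> 'a set set) set" where
  "nest_equiv v = {(N, M). N \<in> nests_inf v \<and> M \<in> nests_inf v
     \<and> (\<forall>B\<in>N. \<exists>C\<in>M. C \<subseteq> B) \<and> (\<forall>C\<in>M. \<exists>B\<in>N. B \<subseteq> C)}"

definition omega_nest_poly :: "('a::field \<Rightarrow> 'g::linordered_ab_group_add) \<Rightarrow> 'a set set \<Rightarrow> 'a poly \<Rightarrow> 'g" where
  "omega_nest_poly v N f = (THE w. w \<in> {omega_ball v B f | B. B \<in> N}
      \<and> (\<forall>u\<in>{omega_ball v B f | B. B \<in> N}. u \<le> w))"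

definition omega_nest :: "('a::field \<Rightarrow> 'g::linordered_ab_group_add) \<Rightarrow> 'a set set \<Rightarrow> 'a poly fract \<Rightarrow> 'g" where
  "omega_nest v N q = (if q = 0 then 0 else
     (SOME w. \<exists>f g. g \<noteq> 0 \<and> q = Fract f g \<and> w = omega_nest_poly v N f - omega_nest_poly v N g))"

definition const_fract :: "'a::field \<Rightarrow> 'a poly fract" where
  "const_fract c = Fract [:c:] 1"

text \<open>V_infty: valuations on Kbar(x) extending v, valuation-algebraic.\<close>
definition V_inf :: "('a::field \<Rightarrow> 'g::linordered_ab_group_add) \<Rightarrow> ('a poly fract \<Rightarrow> 'g) set" where
  "V_inf v = {w. is_valuation w
     \<and> (\<forall>c. w (const_fract c) = v c)
     \<and> (\<forall>\<delta>\<in>value_group w. \<exists>n>0. nmult n \<delta> \<in> value_group v)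
     \<and> (\<forall>q. 0 \<le> w q \<longrightarrow>
          (\<exists>(c::nat \<Rightarrow> 'a) n. (\<forall>i\<le>n. c i = 0 \<or> 0 \<le> v (c i))
             \<and> (\<exists>i\<le>n. c i \<noteq> 0 \<and> v (c i) = 0)
             \<and> (let s = (\<Sum>i\<le>n. const_fract (c i) * q ^ i) in s = 0 \<or> 0 < w s)))}"

end

theory Submission
  imports Defs
begin

text \<open>Let \<open>\<B>\<close> be a nest of closed balls with empty intersection. For a polynomial \<open>f\<close>, some
  ball of \<open>\<B>\<close> avoids the finitely many roots of \<open>f\<close>; on such a ball \<open>B(b, \<gamma>)\<close> every linear
  factor \<open>x - a\<close> of \<open>f\<close> has Gauss value \<open>v (b - a) < \<gamma>\<close>, so from that ball on \<open>\<omega>\<^sub>B(f)\<close> is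
  the constant \<open>v (f(b))\<close>. Thus \<open>\<omega>\<^sub>\<B>\<close> is evaluation at deep points of the nest, which makes it a
  valuation with values in \<open>\<Gamma>\<close>, and the residue of \<open>f/g\<close> is that of the constant \<open>f(b)/g(b)\<close>.
  Over an algebraically closed field a valuation is determined by its values on constants and on
  the linear polynomials \<open>x - a\<close>, and \<open>\<omega>\<^sub>\<B>(x - a)\<close> determines \<open>\<B>\<close> up to cofinality.

  Conversely, for \<open>\<omega> \<in> \<V>\<^sub>\<infinity>\<close> put \<open>\<delta>(a) = \<omega>(x - a)\<close>, which lies in \<open>\<Gamma>\<close> since \<open>\<Gamma>\<close> is divisible.
  The balls \<open>B(a, \<delta>(a))\<close> form a chain by the ultrametric inequality. If \<open>\<delta>\<close> attained a maximum
  at \<open>c\<close>, then \<open>\<omega>\<close> would be the Gauss valuation of \<open>B(c, \<delta>(c))\<close>, for which the residue of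
  \<open>(x - c)/d\<close> (with \<open>v d = \<delta>(c)\<close>) is transcendental, contradicting valuation-algebraicity. Hence
  the chain has empty intersection, and its valuation agrees with \<open>\<omega>\<close> on every \<open>x - a\<close>.\<close>

lemma nmult_minus: "nmult n (- a) = - nmult n (a::'g::linordered_ab_group_add)"
  by (induction n) (simp_all add: algebra_simps)

lemma nmult_mono: "a \<le> b \<Longrightarrow> nmult n a \<le> nmult n (b::'g::linordered_ab_group_add)"
  by (induction n) (simp_all add: add_mono)

lemma nmult_strict_mono:
  "a < b \<Longrightarrow> n > 0 \<Longrightarrow> nmult n a < nmult n (b::'g::linordered_ab_group_add)"
proof (induction n)
  case (Suc n)
  then show ?case
    using nmult_mono[of a b n] by (cases n) (simp_all add: add_less_le_mono)
qed simp

lemma nmult_inj: "nmult n a = nmult n b \<Longrightarrow> n > 0 \<Longrightarrow> a = (b::'g::linordered_ab_group_add)"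
  by (metis less_irrefl linorder_neqE nmult_strict_mono)

lemma mem_value_group_iff: "\<delta> \<in> value_group w \<longleftrightarrow> (\<exists>x. x \<noteq> 0 \<and> w x = \<delta>)"
  by (auto simp: value_group_def)

lemma alg_closed_poly_induct [consumes 1, case_names const linear_factor]:
  fixes F :: "'a::alg_closed_field poly"
  assumes "F \<noteq> 0"
    and const: "\<And>c. c \<noteq> 0 \<Longrightarrow> P [:c:]"
    and linear_factor: "\<And>a R. R \<noteq> 0 \<Longrightarrow> P R \<Longrightarrow> P ([:-a, 1:] * R)"
  shows "P F"
  using assms(1)
proof (induction "degree F" arbitrary: F rule: less_induct)
  case (less F)
  show ?case
  proof (cases "degree F = 0")
    case True
    then show ?thesis using less.prems const by (auto elim: degree_eq_zeroE)
  next
    case False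
    then obtain a where "poly F a = 0" using alg_closed_imp_poly_has_root by blast
    then obtain R where F: "F = [:-a, 1:] * R" using poly_eq_0_iff_dvd by (metis dvdE)
    have R: "R \<noteq> 0" using less.prems F by auto
    then have "degree R < degree F" unfolding F by (subst degree_mult_eq) auto
    then show ?thesis using linear_factor[OF R less.hyps] R F by simp
  qed
qed

lemma bij_betw_quotient_SOME:
  assumes r: "equiv A r"
    and into: "\<And>x. x \<in> A \<Longrightarrow> f x \<in> B"
    and eq_iff: "\<And>x y. x \<in> A \<Longrightarrow> y \<in> A \<Longrightarrow> f x = f y \<longleftrightarrow> (x, y) \<in> r"
    and onto: "\<And>b. b \<in> B \<Longrightarrow> \<exists>x\<in>A. f x = b"
  shows "bij_betw (\<lambda>X. f (SOME x. x \<in> X)) (A // r) B"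
proof -
  have rep: "f (SOME y. (x, y) \<in> r) = f x" if x: "x \<in> A" for x
  proof -
    have "(x, SOME y. (x, y) \<in> r) \<in> r"
      using equiv_class_self[OF r x] by (auto intro: someI)
    then show ?thesis using eq_iff r x by (metis equiv_class_eq_iff)
  qed
  show ?thesis
  proof (rule bij_betw_imageI)
    show "inj_on (\<lambda>X. f (SOME x. x \<in> X)) (A // r)"
      by (rule inj_onI, elim quotientE) (simp add: rep eq_iff eq_equiv_class_iff[OF r])
    show "(\<lambda>X. f (SOME x. x \<in> X)) ` (A // r) = B"
    proof
      show "(\<lambda>X. f (SOME x. x \<in> X)) ` (A // r) \<subseteq> B"
        by (auto elim!: quotientE simp: rep into)
      show "B \<subseteq> (\<lambda>X. f (SOME x. x \<in> X)) ` (A // r)"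
      proof
        fix b assume "b \<in> B"
        then obtain x where x: "x \<in> A" "f x = b" using onto by blast
        then show "b \<in> (\<lambda>X. f (SOME x. x \<in> X)) ` (A // r)"
          using rep[OF x(1)] by (intro image_eqI[of _ _ "r `` {x}"] quotientI) simp_all
      qed
    qed
  qed
qed

lemma pcompose_linear_eq_0_iff [simp]: "p \<circ>\<^sub>p [:a, 1:] = 0 \<longleftrightarrow> p = (0::'a::idom poly)"
  by (simp add: pcompose_eq_0_iff)

lemma pcompose_power: "(p ^ n) \<circ>\<^sub>p q = (p \<circ>\<^sub>p q) ^ n"
  by (induction n) (simp_all add: pcompose_mult one_pCons pcompose_pCons)

lemma poly_nonzero_if_dvd: "f dvd F \<Longrightarrow> poly F r \<noteq> 0 \<Longrightarrow> poly f r \<noteq> 0"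
  by (auto elim!: dvdE)

lemma fract_nonzero_cases:
  assumes "q \<noteq> (0::'a::idom fract)"
  obtains f g where "f \<noteq> 0" "g \<noteq> 0" "q = Fract f g"
  using assms by (cases q rule: Fract_cases_nonzero) auto

lemma Fract_1_eq_0_iff [simp]: "Fract p 1 = 0 \<longleftrightarrow> p = (0::'a::idom)"
  by (simp add: Zero_fract_def eq_fract)

lemma Fract_power_1: "Fract p 1 ^ n = Fract (p ^ n) (1::'a::idom)"
  by (induction n) (simp_all add: fract_collapse)

lemma Fract_sum_1: "(\<Sum>i\<in>A. Fract (f i) 1) = Fract (\<Sum>i\<in>A. f i) (1::'a::idom)"
  by (induction A rule: infinite_finite_induct) (simp_all add: fract_collapse)

lemma const_fract_0 [simp]: "const_fract 0 = 0"
  by (simp add: const_fract_def fract_collapse)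

lemma const_fract_1 [simp]: "const_fract 1 = 1"
  unfolding const_fract_def one_pCons[symmetric] by (rule fract_collapse(2))

lemma const_fract_eq_0_iff: "const_fract c = 0 \<longleftrightarrow> c = 0"
  by (simp add: const_fract_def Zero_fract_def eq_fract)

lemma const_fract_minus [simp]: "const_fract (- c) = - const_fract c"
  by (simp add: const_fract_def minus_fract)

section \<open>Valuations\<close>

locale valuation =
  fixes v :: "'a::field \<Rightarrow> 'g::linordered_ab_group_add"
  assumes is_valuation: "is_valuation v"
begin

lemma val_zero [simp]: "v 0 = 0"
  using is_valuation by (simp add: is_valuation_def)

lemma val_mult: "a \<noteq> 0 \<Longrightarrow> b \<noteq> 0 \<Longrightarrow> v (a * b) = v a + v b"
  using is_valuation by (simp add: is_valuation_def)

lemma val_add_ge_min: "a \<noteq> 0 \<Longrightarrow> b \<noteq> 0 \<Longrightarrow> a + b \<noteq> 0 \<Longrightarrow> min (v a) (v b) \<le> v (a + b)"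
  using is_valuation by (simp add: is_valuation_def)

lemma val_one [simp]: "v 1 = 0"
  using val_mult[of 1 1] by simp

lemma val_minus [simp]: "v (- a) = v a"
proof (cases "a = 0")
  case False
  have "v (-1) + v (-1) = 0" using val_mult[of "-1" "-1"] by simp
  then have "v (-1) = 0" by (metis add_neg_neg add_pos_pos less_irrefl linorder_neqE)
  then show ?thesis using val_mult[of "-1" a] False by simp
qed simp

lemma val_minus_commute: "v (a - b) = v (b - a)"
  by (metis minus_diff_eq val_minus)

lemma val_inverse: "a \<noteq> 0 \<Longrightarrow> v (inverse a) = - v a"
  using val_mult[of a "inverse a"] by (simp add: minus_unique)

lemma val_divide: "a \<noteq> 0 \<Longrightarrow> b \<noteq> 0 \<Longrightarrow> v (a / b) = v a - v b"
  by (simp add: divide_inverse val_mult val_inverse)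

lemma val_power: "a \<noteq> 0 \<Longrightarrow> v (a ^ n) = nmult n (v a)"
  by (induction n) (simp_all add: val_mult)

text \<open>Since \<open>v 0\<close> is the junk value \<open>0\<close>, lower bounds on values are stated with the
  predicates below, which give \<open>0\<close> infinite value.\<close>

definition val_ge :: "'a \<Rightarrow> 'g \<Rightarrow> bool" where
  "val_ge x m \<longleftrightarrow> (x \<noteq> 0 \<longrightarrow> m \<le> v x)"

definition val_gt :: "'a \<Rightarrow> 'g \<Rightarrow> bool" where
  "val_gt x m \<longleftrightarrow> (x \<noteq> 0 \<longrightarrow> m < v x)"

lemma val_ge_0 [simp]: "val_ge 0 m" and val_gt_0 [simp]: "val_gt 0 m"
  by (simp_all add: val_ge_def val_gt_def)

lemma val_ge_minus [simp]: "val_ge (- x) m = val_ge x m"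
  and val_gt_minus [simp]: "val_gt (- x) m = val_gt x m"
  by (simp_all add: val_ge_def val_gt_def)

lemma val_gt_imp_ge: "val_gt x m \<Longrightarrow> val_ge x m"
  by (auto simp: val_gt_def val_ge_def)

lemma val_ge_mono: "val_ge x m \<Longrightarrow> m' \<le> m \<Longrightarrow> val_ge x m'"
  by (auto simp: val_ge_def)

lemma val_ge_add: "val_ge x m \<Longrightarrow> val_ge y m \<Longrightarrow> val_ge (x + y) m"
  using val_add_ge_min[of x y] unfolding val_ge_def
  by (cases "x = 0 \<or> y = 0 \<or> x + y = 0") (auto intro: order.trans[of m "min (v x) (v y)"])

lemma val_gt_add: "val_gt x m \<Longrightarrow> val_gt y m \<Longrightarrow> val_gt (x + y) m"
  using val_add_ge_min[of x y] unfolding val_gt_def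
  by (cases "x = 0 \<or> y = 0 \<or> x + y = 0") (auto intro: order.strict_trans2[of m "min (v x) (v y)"])

lemma val_ge_diff: "val_ge x m \<Longrightarrow> val_ge y m \<Longrightarrow> val_ge (x - y) m"
  using val_ge_add[of x m "- y"] by simp

lemma val_gt_diff: "val_gt x m \<Longrightarrow> val_gt y m \<Longrightarrow> val_gt (x - y) m"
  using val_gt_add[of x m "- y"] by simp

lemma val_ge_mult: "val_ge x m \<Longrightarrow> val_ge y n \<Longrightarrow> val_ge (x * y) (m + n)"
  by (auto simp: val_ge_def val_mult add_mono)

lemma val_gt_mult: "val_gt x m \<Longrightarrow> val_ge y n \<Longrightarrow> val_gt (x * y) (m + n)"
  by (auto simp: val_ge_def val_gt_def val_mult add_less_le_mono)

lemma add_nonzero_if_val_gt: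
  assumes "x \<noteq> 0" "val_gt y (v x)" shows "x + y \<noteq> 0"
proof
  assume "x + y = 0"
  then have "y = - x" by (simp add: add_eq_0_iff)
  then show False using assms by (simp add: val_gt_def)
qed

lemma val_add_eq_if_val_gt:
  assumes x: "x \<noteq> 0" and y: "val_gt y (v x)"
  shows "v (x + y) = v x"
proof (cases "y = 0")
  case False
  then have lt: "v x < v y" using y by (simp add: val_gt_def)
  have xy: "x + y \<noteq> 0" by (rule add_nonzero_if_val_gt[OF x y])
  have "min (v (x + y)) (v (- y)) \<le> v (x + y + - y)"
    using xy False x by (intro val_add_ge_min) simp_all
  then have "v (x + y) \<le> v x" using lt by (auto simp: min_def split: if_splits)
  moreover have "v x \<le> v (x + y)" using val_add_ge_min[OF x False xy] lt by simp
  ultimately show ?thesis by (rule antisym)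
qed simp

definition principal_unit :: "'a \<Rightarrow> bool" where
  "principal_unit x \<longleftrightarrow> val_gt (x - 1) 0"

lemma principal_unit_1 [simp]: "principal_unit 1"
  by (simp add: principal_unit_def)

lemma principal_unit_val:
  assumes "principal_unit x"
  shows "x \<noteq> 0" "v x = 0"
proof -
  have "val_gt (x - 1) (v 1)" using assms by (simp add: principal_unit_def)
  then show "x \<noteq> 0" "v x = 0"
    using add_nonzero_if_val_gt[of 1 "x - 1"] val_add_eq_if_val_gt[of 1 "x - 1"] by simp_all
qed

lemma principal_unit_mult:
  assumes "principal_unit x" "principal_unit y"
  shows "principal_unit (x * y)"
proof -
  have x: "val_gt (x - 1) 0" and y: "val_gt (y - 1) 0"
    using assms by (simp_all add: principal_unit_def)
  have "val_gt ((x - 1) * (y - 1)) 0" using val_gt_mult[OF x val_gt_imp_ge[OF y]] by simp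
  then have "val_gt ((x - 1) * (y - 1) + (x - 1) + (y - 1)) 0"
    using x y by (blast intro: val_gt_add)
  moreover have "(x - 1) * (y - 1) + (x - 1) + (y - 1) = x * y - 1" by (simp add: algebra_simps)
  ultimately show ?thesis by (simp add: principal_unit_def)
qed

lemma principal_unit_divide:
  assumes "principal_unit x" "principal_unit y"
  shows "principal_unit (x / y)"
proof -
  have y: "y \<noteq> 0" "v y = 0" using principal_unit_val[OF assms(2)] by simp_all
  have "val_gt ((x - 1) - (y - 1)) 0"
    using assms unfolding principal_unit_def by (rule val_gt_diff)
  moreover have "x / y - 1 = ((x - 1) - (y - 1)) / y" using y by (simp add: field_simps)
  ultimately show ?thesis using y by (auto simp: principal_unit_def val_gt_def val_divide)
qed

end

section \<open>Gauss valuations\<close>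

context valuation
begin

definition gauss_val :: "'a poly \<Rightarrow> 'g \<Rightarrow> 'g" where
  "gauss_val p \<gamma> = (if p = 0 then 0 else Min {v (coeff p n) + nmult n \<gamma> | n. coeff p n \<noteq> 0})"

definition gauss_bound :: "'a poly \<Rightarrow> 'g \<Rightarrow> 'g \<Rightarrow> bool" where
  "gauss_bound p \<gamma> m \<longleftrightarrow> (\<forall>n. val_ge (coeff p n) (m - nmult n \<gamma>))"

lemma gauss_val_terms_finite: "finite {v (coeff p n) + nmult n \<gamma> | n. coeff p n \<noteq> 0}"
proof -
  have "{v (coeff p n) + nmult n \<gamma> | n. coeff p n \<noteq> 0}
      \<subseteq> (\<lambda>n. v (coeff p n) + nmult n \<gamma>) ` {..degree p}"
    using le_degree by fastforce
  then show ?thesis by (rule finite_subset) simp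
qed

lemma gauss_val_le_term: "coeff p n \<noteq> 0 \<Longrightarrow> gauss_val p \<gamma> \<le> v (coeff p n) + nmult n \<gamma>"
  unfolding gauss_val_def using gauss_val_terms_finite by (auto intro: Min_le)

lemma gauss_val_attained:
  assumes "p \<noteq> 0"
  shows "\<exists>n. coeff p n \<noteq> 0 \<and> v (coeff p n) + nmult n \<gamma> = gauss_val p \<gamma>"
proof -
  have "{v (coeff p n) + nmult n \<gamma> | n. coeff p n \<noteq> 0} \<noteq> {}"
    using assms leading_coeff_neq_0 by blast
  then have "Min {v (coeff p n) + nmult n \<gamma> | n. coeff p n \<noteq> 0}
      \<in> {v (coeff p n) + nmult n \<gamma> | n. coeff p n \<noteq> 0}"
    using gauss_val_terms_finite by (rule Min_in[rotated])
  then show ?thesis using assms unfolding gauss_val_def by auto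
qed

lemma gauss_bound_gauss_val: "gauss_bound p \<gamma> (gauss_val p \<gamma>)"
  by (auto simp: gauss_bound_def val_ge_def diff_le_eq gauss_val_le_term)

lemma gauss_val_greatest:
  assumes "p \<noteq> 0" "gauss_bound p \<gamma> m"
  shows "m \<le> gauss_val p \<gamma>"
proof -
  obtain n where "coeff p n \<noteq> 0" "v (coeff p n) + nmult n \<gamma> = gauss_val p \<gamma>"
    using gauss_val_attained[OF assms(1)] by blast
  then show ?thesis using assms(2) by (force simp: gauss_bound_def val_ge_def diff_le_eq)
qed

lemma gauss_val_eqI:
  assumes "gauss_bound p \<gamma> m" "coeff p n \<noteq> 0" "v (coeff p n) + nmult n \<gamma> = m"
  shows "gauss_val p \<gamma> = m"
proof (rule antisym)
  show "gauss_val p \<gamma> \<le> m" using gauss_val_le_term[OF assms(2), of \<gamma>] assms(3) by simp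
  show "m \<le> gauss_val p \<gamma>" using assms(1,2) by (intro gauss_val_greatest) auto
qed

lemma gauss_val_const [simp]: "gauss_val [:c:] \<gamma> = v c"
proof (cases "c = 0")
  case False
  have "gauss_bound [:c:] \<gamma> (v c)"
    unfolding gauss_bound_def by (auto simp: val_ge_def coeff_pCons split: nat.split)
  then show ?thesis using False by (intro gauss_val_eqI[of _ _ _ 0]) simp_all
qed (simp add: gauss_val_def)

lemma gauss_val_attained_last:
  assumes "p \<noteq> 0"
  obtains i where "coeff p i \<noteq> 0" "v (coeff p i) + nmult i \<gamma> = gauss_val p \<gamma>"
    "\<And>j. i < j \<Longrightarrow> val_gt (coeff p j) (gauss_val p \<gamma> - nmult j \<gamma>)"
proof -
  define S where "S = {n. coeff p n \<noteq> 0 \<and> v (coeff p n) + nmult n \<gamma> = gauss_val p \<gamma>}"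
  have "finite S" by (rule finite_subset[of _ "{..degree p}"]) (auto simp: S_def le_degree)
  moreover have "S \<noteq> {}" using gauss_val_attained[OF assms] by (auto simp: S_def)
  ultimately have i: "Max S \<in> S" and last: "\<And>j. j \<in> S \<Longrightarrow> j \<le> Max S" by auto
  have "val_gt (coeff p j) (gauss_val p \<gamma> - nmult j \<gamma>)" if "Max S < j" for j
  proof -
    have "j \<notin> S" using last that by force
    then show ?thesis using gauss_val_le_term[of p j \<gamma>]
      by (auto simp: S_def val_gt_def diff_less_eq)
  qed
  with i show ?thesis using that by (auto simp: S_def)
qed

lemma gauss_bound_0 [simp]: "gauss_bound 0 \<gamma> m"
  by (simp add: gauss_bound_def)

lemma gauss_bound_add: "gauss_bound p \<gamma> m \<Longrightarrow> gauss_bound q \<gamma> m \<Longrightarrow> gauss_bound (p + q) \<gamma> m"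
  by (simp add: gauss_bound_def val_ge_add)

lemma gauss_bound_pCons: "gauss_bound (pCons a p) \<gamma> m \<longleftrightarrow> val_ge a m \<and> gauss_bound p \<gamma> (m - \<gamma>)"
proof -
  have "gauss_bound (pCons a p) \<gamma> m \<longleftrightarrow>
      val_ge a m \<and> (\<forall>n. val_ge (coeff p n) (m - nmult (Suc n) \<gamma>))"
    unfolding gauss_bound_def
    by (metis coeff_pCons_0 coeff_pCons_Suc diff_zero nmult.simps not0_implies_Suc)
  also have "(\<lambda>n. m - nmult (Suc n) \<gamma>) = (\<lambda>n. m - \<gamma> - nmult n \<gamma>)"
    by (simp add: algebra_simps)
  finally show ?thesis by (simp add: gauss_bound_def)
qed

lemma gauss_bound_mono: "gauss_bound p \<gamma> m \<Longrightarrow> \<gamma> \<le> \<gamma>' \<Longrightarrow> gauss_bound p \<gamma>' m"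
  unfolding gauss_bound_def by (meson diff_left_mono nmult_mono val_ge_mono)

lemma gauss_val_mono: "\<gamma> \<le> \<gamma>' \<Longrightarrow> gauss_val p \<gamma> \<le> gauss_val p \<gamma>'"
  by (cases "p = 0")
    (auto simp: gauss_val_def[of 0]
      intro: gauss_val_greatest gauss_bound_mono[OF gauss_bound_gauss_val])

lemma gauss_bound_linear_factor:
  assumes "gauss_bound p \<gamma> m" "val_ge s t" "t \<le> \<gamma>"
  shows "gauss_bound ([:s, 1:] * p) \<gamma> (t + m)"
  unfolding gauss_bound_def
proof
  fix n
  have p: "val_ge (coeff p k) (m - nmult k \<gamma>)" for k
    using assms(1) by (simp add: gauss_bound_def)
  have sp: "val_ge (s * coeff p n) (t + m - nmult n \<gamma>)"
    using val_ge_mult[OF assms(2) p] by (simp add: add_diff_eq)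
  show "val_ge (coeff ([:s, 1:] * p) n) (t + m - nmult n \<gamma>)"
  proof (cases n)
    case (Suc k)
    have "t + m - nmult n \<gamma> \<le> m - nmult k \<gamma>" using assms(3) Suc by (simp add: algebra_simps)
    then show ?thesis using Suc sp val_ge_mono[OF p]
      by (simp add: mult_pCons_left val_ge_add)
  qed (use sp in \<open>simp add: mult_pCons_left\<close>)
qed

text \<open>Multiplying by \<open>x + s\<close> adds \<open>\<gamma>\<close> to the Gauss value when the root \<open>-s\<close> lies in the disc
  of radius \<open>\<gamma>\<close> (the last dominant coefficient moves up one place), and \<open>v s\<close> otherwise (every
  dominant coefficient is multiplied by \<open>s\<close>).\<close>

lemma gauss_val_linear_factor_attained_inside:
  assumes p: "p \<noteq> 0" and s: "val_ge s \<gamma>"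
  shows "\<exists>n. coeff ([:s, 1:] * p) n \<noteq> 0 \<and> v (coeff ([:s, 1:] * p) n) + nmult n \<gamma> = \<gamma> + gauss_val p \<gamma>"
proof -
  obtain i where i: "coeff p i \<noteq> 0" "v (coeff p i) + nmult i \<gamma> = gauss_val p \<gamma>"
    and after_i: "\<And>j. i < j \<Longrightarrow> val_gt (coeff p j) (gauss_val p \<gamma> - nmult j \<gamma>)"
    using gauss_val_attained_last[OF p] by blast
  have "val_gt (coeff p (Suc i) * s) (gauss_val p \<gamma> - nmult (Suc i) \<gamma> + \<gamma>)"
    using after_i[of "Suc i"] s by (intro val_gt_mult) simp_all
  moreover have "gauss_val p \<gamma> - nmult (Suc i) \<gamma> + \<gamma> = v (coeff p i)"
    using i(2) by (simp add: algebra_simps)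
  ultimately have dom: "val_gt (s * coeff p (Suc i)) (v (coeff p i))" by (simp add: mult.commute)
  have "coeff ([:s, 1:] * p) (Suc i) = coeff p i + s * coeff p (Suc i)"
    by (simp add: mult_pCons_left)
  then show ?thesis
    using i add_nonzero_if_val_gt[OF i(1) dom] val_add_eq_if_val_gt[OF i(1) dom]
    by (intro exI[of _ "Suc i"]) (auto simp: algebra_simps)
qed

lemma gauss_val_linear_factor_attained_outside:
  assumes p: "p \<noteq> 0" and s: "s \<noteq> 0" "v s < \<gamma>"
  shows "\<exists>n. coeff ([:s, 1:] * p) n \<noteq> 0 \<and> v (coeff ([:s, 1:] * p) n) + nmult n \<gamma> = v s + gauss_val p \<gamma>"
proof -
  obtain i where i: "coeff p i \<noteq> 0" "v (coeff p i) + nmult i \<gamma> = gauss_val p \<gamma>"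
    using gauss_val_attained[OF p] by blast
  have si: "s * coeff p i \<noteq> 0" using s i by simp
  have vsp: "v (s * coeff p i) = v s + gauss_val p \<gamma> - nmult i \<gamma>"
    using s i by (simp add: val_mult algebra_simps)
  show ?thesis
  proof (cases i)
    case 0
    then show ?thesis using si vsp by (intro exI[of _ 0]) (simp add: mult_pCons_left)
  next
    case (Suc k)
    have "val_ge (coeff p k) (gauss_val p \<gamma> - nmult k \<gamma>)"
      using gauss_bound_gauss_val[of p \<gamma>] by (simp add: gauss_bound_def)
    moreover have "v s + gauss_val p \<gamma> - nmult i \<gamma> < gauss_val p \<gamma> - nmult k \<gamma>"
      using s(2) Suc by (simp add: algebra_simps)
    ultimately have dom: "val_gt (coeff p k) (v (s * coeff p i))"
      unfolding vsp val_ge_def val_gt_def by (blast intro: order.strict_trans2)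
    have "coeff ([:s, 1:] * p) i = s * coeff p i + coeff p k"
      using Suc by (simp add: mult_pCons_left add.commute)
    then show ?thesis
      using add_nonzero_if_val_gt[OF si dom] val_add_eq_if_val_gt[OF si dom] vsp
      by (intro exI[of _ i]) (simp add: algebra_simps)
  qed
qed

lemma gauss_val_linear_factor:
  assumes p: "p \<noteq> 0"
  shows "gauss_val ([:s, 1:] * p) \<gamma> = (if s = 0 then \<gamma> else min \<gamma> (v s)) + gauss_val p \<gamma>"
proof -
  define t where "t = (if s = 0 then \<gamma> else min \<gamma> (v s))"
  have "gauss_bound ([:s, 1:] * p) \<gamma> (t + gauss_val p \<gamma>)"
    by (rule gauss_bound_linear_factor) (auto simp: t_def val_ge_def gauss_bound_gauss_val)
  moreover have "\<exists>n. coeff ([:s, 1:] * p) n \<noteq> 0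
      \<and> v (coeff ([:s, 1:] * p) n) + nmult n \<gamma> = t + gauss_val p \<gamma>"
  proof (cases "s = 0 \<or> \<gamma> \<le> v s")
    case True
    then show ?thesis
      using gauss_val_linear_factor_attained_inside[OF p, of s \<gamma>] by (auto simp: t_def val_ge_def)
  next
    case False
    then show ?thesis
      using gauss_val_linear_factor_attained_outside[OF p, of s \<gamma>] by (auto simp: t_def)
  qed
  ultimately show ?thesis unfolding t_def[symmetric] by (metis gauss_val_eqI)
qed

lemma gauss_bound_pcompose:
  assumes "gauss_bound p \<gamma> m" "val_ge d \<gamma>"
  shows "gauss_bound (p \<circ>\<^sub>p [:d, 1:]) \<gamma> m"
  using assms(1)
proof (induction p arbitrary: m)
  case (pCons a p)
  then have "gauss_bound [:a:] \<gamma> m" and "gauss_bound (p \<circ>\<^sub>p [:d, 1:]) \<gamma> (m - \<gamma>)"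
    by (simp_all add: gauss_bound_pCons)
  moreover from this(2) have "gauss_bound ([:d, 1:] * (p \<circ>\<^sub>p [:d, 1:])) \<gamma> (\<gamma> + (m - \<gamma>))"
    using assms(2) by (rule gauss_bound_linear_factor) simp
  ultimately show ?case unfolding pcompose_pCons by (simp add: gauss_bound_add)
qed simp

text \<open>For the Gauss valuation of radius \<open>\<gamma>\<close>, a polynomial in \<open>x/d\<close> with \<open>v d = \<gamma>\<close> whose
  coefficients are integral, one of them a unit, has value \<open>0\<close>: the residue of \<open>x/d\<close> is
  transcendental.\<close>

lemma gauss_val_unit_scaled_sum:
  assumes e: "e \<noteq> 0" "v e = - \<gamma>"
    and c: "\<forall>i\<le>n. c i = 0 \<or> 0 \<le> v (c i)" "i0 \<le> n" "c i0 \<noteq> 0" "v (c i0) = 0"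
  shows "gauss_val (\<Sum>i\<le>n. monom (c i * e ^ i) i) \<gamma> = 0"
proof -
  define F where "F = (\<Sum>i\<le>n. monom (c i * e ^ i) i)"
  have coeff_F: "coeff F k = (if k \<le> n then c k * e ^ k else 0)" for k
    by (simp add: F_def coeff_sum)
  have val: "v (c k * e ^ k) = v (c k) - nmult k \<gamma>" if "c k \<noteq> 0" for k
    using that e by (simp add: val_mult val_power nmult_minus)
  have "gauss_bound F \<gamma> 0"
    unfolding gauss_bound_def
  proof
    fix k
    show "val_ge (coeff F k) (0 - nmult k \<gamma>)"
    proof (cases "k \<le> n \<and> c k \<noteq> 0")
      case True
      then show ?thesis using c(1) val[of k] by (auto simp: coeff_F val_ge_def)
    qed (auto simp: coeff_F)
  qed
  then show ?thesis
    unfolding F_def[symmetric] using c(2-4) e(1) val[of i0]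
    by (intro gauss_val_eqI[of _ _ _ i0]) (simp_all add: coeff_F)
qed

lemma omega_center_eq_gauss_val: "omega_center v a \<gamma> f = gauss_val (f \<circ>\<^sub>p [:a, 1:]) \<gamma>"
  by (simp add: omega_center_def gauss_val_def)

lemma omega_center_recenter:
  assumes "val_ge (b - a) \<gamma>"
  shows "omega_center v a \<gamma> f = omega_center v b \<gamma> f"
proof -
  have le: "omega_center v a \<gamma> f \<le> omega_center v b \<gamma> f" if "val_ge (b - a) \<gamma>" for a b
  proof (cases "f = 0")
    case False
    have "f \<circ>\<^sub>p [:b, 1:] = (f \<circ>\<^sub>p [:a, 1:]) \<circ>\<^sub>p [:b - a, 1:]"
      by (simp add: pcompose_assoc[symmetric] pcompose_pCons)
    then have "gauss_bound (f \<circ>\<^sub>p [:b, 1:]) \<gamma> (omega_center v a \<gamma> f)"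
      using gauss_bound_pcompose[OF gauss_bound_gauss_val that]
      by (simp add: omega_center_eq_gauss_val)
    then show ?thesis using False by (simp add: omega_center_eq_gauss_val gauss_val_greatest)
  qed (simp add: omega_center_def)
  have "val_ge (a - b) \<gamma>" using assms val_ge_minus[of "a - b"] by simp
  then show ?thesis using le assms by (metis antisym)
qed

lemma omega_center_mono: "\<gamma> \<le> \<gamma>' \<Longrightarrow> omega_center v a \<gamma> f \<le> omega_center v a \<gamma>' f"
  by (simp add: omega_center_eq_gauss_val gauss_val_mono)

lemma omega_center_const [simp]: "omega_center v a \<gamma> [:c:] = v c"
  by (simp add: omega_center_eq_gauss_val)

lemma omega_center_linear_factor:
  assumes "f \<noteq> 0"
  shows "omega_center v c \<gamma> ([:-a, 1:] * f)
      = (if a = c then \<gamma> else min \<gamma> (v (c - a))) + omega_center v c \<gamma> f"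
proof -
  have "[:-a, 1:] \<circ>\<^sub>p [:c, 1:] = [:c - a, 1:]" by (simp add: pcompose_pCons)
  then have "([:-a, 1:] * f) \<circ>\<^sub>p [:c, 1:] = [:c - a, 1:] * (f \<circ>\<^sub>p [:c, 1:])"
    by (simp only: pcompose_mult)
  then show ?thesis
    using assms gauss_val_linear_factor[of "f \<circ>\<^sub>p [:c, 1:]" "c - a" \<gamma>]
    by (simp add: omega_center_eq_gauss_val)
qed

lemma pcompose_scaled_power_sum:
  fixes e :: 'a
  shows "(\<Sum>i\<le>n. [:c i:] * smult e [:-a, 1:] ^ i) \<circ>\<^sub>p [:a, 1:] = (\<Sum>i\<le>n. monom (c i * e ^ i) i)"
proof -
  have "smult e [:-a, 1:] \<circ>\<^sub>p [:a, 1:] = [:0, e:]"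
    by (simp add: pcompose_smult pcompose_pCons)
  moreover have "[:0, e:] ^ i = smult (e ^ i) ([:0, 1:] ^ i)" for i
    using smult_power[of e "[:0, 1:]" i] by simp
  ultimately show ?thesis
    by (simp add: pcompose_sum pcompose_smult pcompose_power monom_altdef)
qed

lemma omega_center_scaled_power_sum:
  assumes "e \<noteq> 0" "v e = - \<gamma>"
    and "\<forall>i\<le>n. c i = 0 \<or> 0 \<le> v (c i)" "i0 \<le> n" "c i0 \<noteq> 0" "v (c i0) = 0"
  shows "(\<Sum>i\<le>n. [:c i:] * smult e [:-a, 1:] ^ i) \<noteq> 0"
    and "omega_center v a \<gamma> (\<Sum>i\<le>n. [:c i:] * smult e [:-a, 1:] ^ i) = 0"
proof -
  have "coeff ((\<Sum>i\<le>n. [:c i:] * smult e [:-a, 1:] ^ i) \<circ>\<^sub>p [:a, 1:]) i0 \<noteq> 0"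
    using assms unfolding pcompose_scaled_power_sum by (simp add: coeff_sum_monom)
  then show "(\<Sum>i\<le>n. [:c i:] * smult e [:-a, 1:] ^ i) \<noteq> 0" by auto
  show "omega_center v a \<gamma> (\<Sum>i\<le>n. [:c i:] * smult e [:-a, 1:] ^ i) = 0"
    unfolding omega_center_eq_gauss_val pcompose_scaled_power_sum
    using gauss_val_unit_scaled_sum[OF assms] .
qed

lemma mem_cball_v_iff: "c \<in> cball_v v a \<gamma> \<longleftrightarrow> val_ge (c - a) \<gamma>"
  by (auto simp: cball_v_def val_ge_def)

lemma center_mem_cball_v [simp]: "a \<in> cball_v v a \<gamma>"
  by (simp add: cball_v_def)

lemma cball_v_recenter:
  assumes "b \<in> cball_v v a \<gamma>"
  shows "cball_v v b \<gamma> = cball_v v a \<gamma>"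
proof -
  have ba: "val_ge (b - a) \<gamma>" using assms by (simp add: mem_cball_v_iff)
  have "val_ge (c - b) \<gamma> \<longleftrightarrow> val_ge (c - a) \<gamma>" for c
    using val_ge_add[OF _ ba, of "c - b"] val_ge_diff[OF _ ba, of "c - a"] by auto
  then show ?thesis by (auto simp: mem_cball_v_iff)
qed

lemma cball_v_radius_le:
  assumes "\<gamma> \<in> value_group v" "cball_v v a \<gamma> \<subseteq> cball_v v b \<gamma>'"
  shows "\<gamma>' \<le> \<gamma>"
proof -
  obtain d where d: "d \<noteq> 0" "v d = \<gamma>" using assms(1) by (auto simp: value_group_def)
  have "cball_v v a \<gamma>' = cball_v v b \<gamma>'"
    using assms(2) center_mem_cball_v cball_v_recenter by blast
  moreover have "a + d \<in> cball_v v a \<gamma>" using d by (simp add: cball_v_def)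
  ultimately have "a + d \<in> cball_v v a \<gamma>'" using assms(2) by blast
  then show ?thesis using d by (simp add: cball_v_def)
qed

lemma omega_ball_cball_v:
  assumes "\<gamma> \<in> value_group v"
  shows "omega_ball v (cball_v v a \<gamma>) f = omega_center v a \<gamma> f"
  unfolding omega_ball_def
proof (rule some_equality)
  fix w assume "\<exists>a' \<gamma>'. \<gamma>' \<in> value_group v \<and> cball_v v a \<gamma> = cball_v v a' \<gamma>'
      \<and> w = omega_center v a' \<gamma>' f"
  then obtain a' \<gamma>' where a': "\<gamma>' \<in> value_group v" "cball_v v a \<gamma> = cball_v v a' \<gamma>'"
      "w = omega_center v a' \<gamma>' f" by blast
  have "\<gamma>' = \<gamma>" using cball_v_radius_le[OF assms] cball_v_radius_le[OF a'(1)] a'(2)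
    by (metis antisym order_refl)
  moreover have "val_ge (a - a') \<gamma>'" using a'(2) center_mem_cball_v mem_cball_v_iff by blast
  ultimately show "w = omega_center v a \<gamma> f" using a'(3) omega_center_recenter by simp
qed (use assms in blast)

end

section \<open>Valuation-algebraic extensions\<close>

definition residue_algebraic ::
    "('a::field \<Rightarrow> 'g::linordered_ab_group_add) \<Rightarrow> ('a poly fract \<Rightarrow> 'g) \<Rightarrow> 'a poly fract \<Rightarrow> bool" where
  "residue_algebraic v w q \<longleftrightarrow> (\<exists>(c::nat \<Rightarrow> 'a) n. (\<forall>i\<le>n. c i = 0 \<or> 0 \<le> v (c i))
     \<and> (\<exists>i\<le>n. c i \<noteq> 0 \<and> v (c i) = 0)
     \<and> (let s = (\<Sum>i\<le>n. const_fract (c i) * q ^ i) in s = 0 \<or> 0 < w s))"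

lemma mem_V_inf_iff: "w \<in> V_inf v \<longleftrightarrow> is_valuation w \<and> (\<forall>c. w (const_fract c) = v c)
    \<and> (\<forall>\<delta>\<in>value_group w. \<exists>n>0. nmult n \<delta> \<in> value_group v)
    \<and> (\<forall>q. 0 \<le> w q \<longrightarrow> residue_algebraic v w q)"
  unfolding V_inf_def residue_algebraic_def by blast

lemma (in valuation) residue_algebraic_linear:
  assumes "e = 0 \<or> 0 \<le> v e" "q - const_fract e = 0 \<or> 0 < w (q - const_fract e)"
  shows "residue_algebraic v w q"
proof -
  define c where "c = (\<lambda>i::nat. if i = 0 then - e else if i = 1 then 1 else 0)"
  have "{..1::nat} = {0, 1}" by auto
  then have "(\<Sum>i\<le>1. const_fract (c i) * q ^ i) = q - const_fract e"
    by (simp add: c_def)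
  moreover have "\<forall>i\<le>1. c i = 0 \<or> 0 \<le> v (c i)" using assms(1) by (auto simp: c_def le_Suc_eq)
  moreover have "c 1 \<noteq> 0 \<and> v (c 1) = 0" by (simp add: c_def)
  ultimately show ?thesis
    using assms(2) unfolding residue_algebraic_def Let_def by (intro exI[of _ c] exI[of _ 1]) auto
qed

lemma valuation_eqI_linear_factors:
  fixes w1 w2 :: "'a::alg_closed_field poly fract \<Rightarrow> 'g::linordered_ab_group_add"
  assumes "is_valuation w1" "is_valuation w2"
    and const: "\<And>c. w1 (const_fract c) = w2 (const_fract c)"
    and linear: "\<And>a. w1 (Fract [:-a, 1:] 1) = w2 (Fract [:-a, 1:] 1)"
  shows "w1 = w2"
proof
  interpret W1: valuation w1 by (rule valuation.intro) fact
  interpret W2: valuation w2 by (rule valuation.intro) fact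
  have poly: "w1 (Fract F 1) = w2 (Fract F 1)" if "F \<noteq> 0" for F
    using that
  proof (induction F rule: alg_closed_poly_induct)
    case (const c)
    then show ?case using assms(3)[of c] by (simp add: const_fract_def)
  next
    case (linear_factor a R)
    have prod: "Fract ([:-a, 1:] * R) 1 = Fract [:-a, 1:] 1 * Fract R 1" by simp
    have nz: "Fract [:-a, 1:] 1 \<noteq> 0" "Fract R 1 \<noteq> 0" using linear_factor by simp_all
    show ?case
      unfolding prod W1.val_mult[OF nz] W2.val_mult[OF nz] using linear_factor linear[of a] by simp
  qed
  fix q
  show "w1 q = w2 q"
  proof (cases "q = 0")
    case False
    then obtain f g where fg: "f \<noteq> 0" "g \<noteq> 0" "q = Fract f g" by (rule fract_nonzero_cases)
    then have f: "Fract f 1 = q * Fract g 1" by (simp add: eq_fract)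
    have nz: "q \<noteq> 0" "Fract g 1 \<noteq> 0" using False fg by simp_all
    have "w1 (Fract f 1) = w1 q + w1 (Fract g 1)" "w2 (Fract f 1) = w2 q + w2 (Fract g 1)"
      unfolding f by (rule W1.val_mult[OF nz], rule W2.val_mult[OF nz])
    then have "w1 q = w1 (Fract f 1) - w1 (Fract g 1)" "w2 q = w2 (Fract f 1) - w2 (Fract g 1)"
      by (simp_all add: eq_diff_eq)
    then show ?thesis using poly[OF fg(1)] poly[OF fg(2)] by simp
  qed simp
qed

section \<open>Algebraically closed fields: discs free of roots\<close>

locale alg_closed_valuation =
  valuation v for v :: "'a::alg_closed_field \<Rightarrow> 'g::linordered_ab_group_add"
begin

lemma value_group_root:
  assumes "n > 0" "nmult n \<delta> \<in> value_group v"
  shows "\<delta> \<in> value_group v"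
proof -
  obtain e where e: "e \<noteq> 0" "v e = nmult n \<delta>"
    using assms(2) by (auto simp: mem_value_group_iff)
  obtain r where r: "r ^ n = e" using nth_root_exists[OF assms(1)] by blast
  then have "r \<noteq> 0" using e(1) assms(1) by auto
  moreover have "nmult n (v r) = nmult n \<delta>" using val_power[OF \<open>r \<noteq> 0\<close>, of n] r e(2) by simp
  ultimately show ?thesis using nmult_inj assms(1) by (auto simp: mem_value_group_iff)
qed

text \<open>On a disc free of roots of \<open>f\<close>, each linear factor \<open>x - a\<close> of \<open>f\<close> contributes
  \<open>v (b - a)\<close>, which is smaller than the radius.\<close>

lemma omega_center_root_free:
  assumes "\<forall>r\<in>cball_v v b \<gamma>. poly f r \<noteq> 0"
  shows "omega_center v b \<gamma> f = v (poly f b)"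
proof -
  have "f \<noteq> 0" using assms center_mem_cball_v by fastforce
  then show ?thesis using assms
  proof (induction f rule: alg_closed_poly_induct)
    case (linear_factor a R)
    have "a \<notin> cball_v v b \<gamma>" using linear_factor.prems by force
    then have a: "a \<noteq> b" "v (b - a) < \<gamma>" by (auto simp: cball_v_def val_minus_commute)
    have R: "\<forall>r\<in>cball_v v b \<gamma>. poly R r \<noteq> 0" using linear_factor.prems by simp
    have "omega_center v b \<gamma> ([:-a, 1:] * R) = v (b - a) + v (poly R b)"
      using omega_center_linear_factor[OF linear_factor.hyps(1), of b \<gamma> a] linear_factor.IH[OF R] a
      by simp
    moreover have "poly ([:-a, 1:] * R) b = (b - a) * poly R b" by (simp add: algebra_simps)
    ultimately show ?case using a(1) R by (simp add: val_mult)
  qed simp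
qed

lemma principal_unit_poly_ratio:
  assumes "\<forall>r\<in>cball_v v b \<gamma>. poly f r \<noteq> 0" "e \<in> cball_v v b \<gamma>"
  shows "principal_unit (poly f e / poly f b)"
proof -
  have "f \<noteq> 0" using assms center_mem_cball_v by fastforce
  then show ?thesis using assms(1)
  proof (induction f rule: alg_closed_poly_induct)
    case (linear_factor a R)
    have "a \<notin> cball_v v b \<gamma>" using linear_factor.prems by force
    then have a: "b - a \<noteq> 0" "v (b - a) < \<gamma>" by (auto simp: cball_v_def val_minus_commute)
    have "val_gt ((e - b) / (b - a)) 0"
      using assms(2) a by (auto simp: mem_cball_v_iff val_ge_def val_gt_def val_divide)
    moreover have "(e - b) / (b - a) = (e - a) / (b - a) - 1" using a by (simp add: field_simps)
    ultimately have "principal_unit ((e - a) / (b - a))" by (simp add: principal_unit_def)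
    moreover have "principal_unit (poly R e / poly R b)" using linear_factor by force
    moreover have "poly ([:-a, 1:] * R) e / poly ([:-a, 1:] * R) b
        = (e - a) / (b - a) * (poly R e / poly R b)"
      by (simp add: algebra_simps)
    ultimately show ?case by (simp only: principal_unit_mult)
  qed simp
qed

end

section \<open>The valuation of a nest\<close>

context valuation
begin

lemma nests_infD:
  assumes "N \<in> nests_inf v"
  shows "N \<noteq> {}" and "B \<in> N \<Longrightarrow> \<exists>a \<gamma>. \<gamma> \<in> value_group v \<and> B = cball_v v a \<gamma>"
    and "B \<in> N \<Longrightarrow> C \<in> N \<Longrightarrow> B \<subseteq> C \<or> C \<subseteq> B" and "\<Inter> N = {}"
  using assms unfolding nests_inf_def is_closed_ball_def by blast+

lemma nest_common_point:
  assumes "N \<in> nests_inf v" "B \<in> N" "C \<in> N"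
  obtains c where "c \<in> B" "c \<in> C"
proof -
  have "\<exists>a. a \<in> D" if "D \<in> N" for D
    using nests_infD(2)[OF assms(1) that] center_mem_cball_v by blast
  then show ?thesis using nests_infD(3)[OF assms] assms that by blast
qed

lemma nest_avoids_finite:
  assumes N: "N \<in> nests_inf v" and "finite S"
  shows "\<exists>B\<in>N. B \<inter> S = {}"
  using assms(2)
proof (induction S rule: finite_induct)
  case empty
  then show ?case using nests_infD(1)[OF N] by blast
next
  case (insert x S)
  then obtain B where B: "B \<in> N" "B \<inter> S = {}" by blast
  obtain C where C: "C \<in> N" "x \<notin> C" using nests_infD(4)[OF N] by blast
  show ?case using nests_infD(3)[OF N B(1) C(1)] B C by blast
qed

lemma nest_root_free_ball:
  assumes "N \<in> nests_inf v" "f \<noteq> 0"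
  obtains B b where "B \<in> N" "b \<in> B" "\<forall>r\<in>B. poly f r \<noteq> 0"
proof -
  obtain B where B: "B \<in> N" "\<forall>r\<in>B. poly f r \<noteq> 0"
    using nest_avoids_finite[OF assms(1) poly_roots_finite[OF assms(2)]] by blast
  then show ?thesis using nest_common_point[OF assms(1) B(1) B(1)] that by blast
qed

lemma nest_ball_recenter:
  assumes "N \<in> nests_inf v" "B \<in> N" "b \<in> B"
  obtains \<gamma> where "\<gamma> \<in> value_group v" "B = cball_v v b \<gamma>"
proof -
  obtain a \<gamma> where "\<gamma> \<in> value_group v" "B = cball_v v a \<gamma>" using nests_infD(2)[OF assms(1,2)] by blast
  then show ?thesis using that cball_v_recenter assms(3) by simp
qed

lemma omega_nest_poly_eqI:
  assumes "B \<in> N" "omega_ball v B f = u" "\<And>C. C \<in> N \<Longrightarrow> omega_ball v C f \<le> u"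
  shows "omega_nest_poly v N f = u"
  unfolding omega_nest_poly_def by (rule the_equality) (use assms in \<open>force+\<close>)

end

context alg_closed_valuation
begin

lemma omega_nest_poly_eq_val:
  assumes N: "N \<in> nests_inf v" and B: "B \<in> N" "\<forall>r\<in>B. poly f r \<noteq> 0" and b: "b \<in> B"
  shows "omega_nest_poly v N f = v (poly f b)"
proof -
  obtain \<gamma>0 where \<gamma>0: "\<gamma>0 \<in> value_group v" and Bb: "B = cball_v v b \<gamma>0"
    using nest_ball_recenter[OF N B(1) b] .
  have stable: "omega_center v b \<gamma>0 f = v (poly f b)"
    using B(2) Bb omega_center_root_free by simp
  show ?thesis
  proof (rule omega_nest_poly_eqI[OF B(1)])
    show "omega_ball v B f = v (poly f b)" using Bb omega_ball_cball_v[OF \<gamma>0(1)] stable by simp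
  next
    fix C assume C: "C \<in> N"
    then obtain c \<gamma> where \<gamma>: "\<gamma> \<in> value_group v" "C = cball_v v c \<gamma>"
      using nests_infD(2)[OF N] by blast
    consider "C \<subseteq> B" | "B \<subseteq> C" using nests_infD(3)[OF N C B(1)] by blast
    then show "omega_ball v C f \<le> v (poly f b)"
    proof cases
      case 1
      then have "c \<in> cball_v v b \<gamma>0" using \<gamma>(2) Bb center_mem_cball_v by blast
      then have "omega_center v c \<gamma>0 f = omega_center v b \<gamma>0 f"
        by (simp add: omega_center_recenter[symmetric] mem_cball_v_iff)
      moreover have "omega_center v c \<gamma> f = v (poly f c)" "omega_center v c \<gamma>0 f = v (poly f c)"
        using 1 B(2) \<gamma>(2) Bb cball_v_recenter[OF \<open>c \<in> cball_v v b \<gamma>0\<close>]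
        by (auto intro!: omega_center_root_free)
      ultimately show ?thesis using \<gamma> stable by (simp add: omega_ball_cball_v)
    next
      case 2
      then have "C = cball_v v b \<gamma>" using \<gamma>(2) b cball_v_recenter by blast
      moreover have "\<gamma> \<le> \<gamma>0" using 2 Bb \<open>C = cball_v v b \<gamma>\<close> cball_v_radius_le[OF \<gamma>0(1)] by simp
      ultimately show ?thesis
        using stable omega_center_mono[of \<gamma> \<gamma>0 b f] \<gamma>(1) by (simp add: omega_ball_cball_v)
    qed
  qed
qed

lemma omega_nest_poly_diff_eq_val:
  assumes N: "N \<in> nests_inf v" and B: "B \<in> N" "\<forall>r\<in>B. poly f r \<noteq> 0 \<and> poly g r \<noteq> 0"
    and b: "b \<in> B"
  shows "omega_nest_poly v N f - omega_nest_poly v N g = v (poly f b / poly g b)"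
  using b B by (simp add: omega_nest_poly_eq_val[OF N B(1)] val_divide)

lemma omega_nest_poly_diff_cong:
  assumes N: "N \<in> nests_inf v" and fg: "f \<noteq> 0" "g \<noteq> 0" "g' \<noteq> 0"
    and eq: "Fract f g = Fract f' g'"
  shows "omega_nest_poly v N f' - omega_nest_poly v N g'
    = omega_nest_poly v N f - omega_nest_poly v N g"
proof -
  have cross: "f * g' = f' * g" using eq fg by (simp add: eq_fract)
  then have "f * g * f' * g' \<noteq> 0" using fg by auto
  then obtain B c where B: "B \<in> N" "c \<in> B" "\<forall>r\<in>B. poly (f * g * f' * g') r \<noteq> 0"
    using nest_root_free_ball[OF N] by blast
  then have nz: "\<forall>r\<in>B. poly f r \<noteq> 0 \<and> poly g r \<noteq> 0" "\<forall>r\<in>B. poly f' r \<noteq> 0 \<and> poly g' r \<noteq> 0"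
    by auto
  have "poly f c * poly g' c = poly f' c * poly g c"
    using arg_cong[OF cross, of "\<lambda>p. poly p c"] by simp
  then have "poly f' c / poly g' c = poly f c / poly g c" using nz B(2) by (simp add: frac_eq_eq)
  then show ?thesis
    using omega_nest_poly_diff_eq_val[OF N B(1) nz(1) B(2)]
      omega_nest_poly_diff_eq_val[OF N B(1) nz(2) B(2)] by simp
qed

lemma omega_nest_Fract_eq_val:
  assumes N: "N \<in> nests_inf v" and B: "B \<in> N" "\<forall>r\<in>B. poly f r \<noteq> 0 \<and> poly g r \<noteq> 0"
    and b: "b \<in> B"
  shows "omega_nest v N (Fract f g) = v (poly f b / poly g b)"
proof -
  have fg: "f \<noteq> 0" "g \<noteq> 0" using B(2) b by auto
  then have "Fract f g \<noteq> 0" by (simp add: Zero_fract_def eq_fract)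
  note val = omega_nest_poly_diff_eq_val[OF N B b]
  show ?thesis
    unfolding omega_nest_def if_not_P[OF \<open>Fract f g \<noteq> 0\<close>]
  proof (rule some_equality)
    fix w assume "\<exists>f' g'. g' \<noteq> 0 \<and> Fract f g = Fract f' g'
      \<and> w = omega_nest_poly v N f' - omega_nest_poly v N g'"
    then obtain f' g' where "g' \<noteq> 0" "Fract f g = Fract f' g'"
      and w: "w = omega_nest_poly v N f' - omega_nest_poly v N g'" by blast
    then show "w = v (poly f b / poly g b)" using omega_nest_poly_diff_cong[OF N fg] val by simp
  qed (use fg(2) val in \<open>intro exI[of _ f] exI[of _ g], simp\<close>)
qed

lemma omega_nest_eval_point:
  assumes N: "N \<in> nests_inf v" and F: "F \<noteq> 0"
  obtains c where "\<And>f g. f dvd F \<Longrightarrow> g dvd F \<Longrightarrow>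
    poly f c \<noteq> 0 \<and> poly g c \<noteq> 0 \<and> omega_nest v N (Fract f g) = v (poly f c / poly g c)"
proof -
  obtain B c where B: "B \<in> N" "c \<in> B" "\<forall>r\<in>B. poly F r \<noteq> 0"
    using nest_root_free_ball[OF N F] by blast
  have "poly f c \<noteq> 0 \<and> poly g c \<noteq> 0 \<and> omega_nest v N (Fract f g) = v (poly f c / poly g c)"
    if "f dvd F" "g dvd F" for f g
  proof -
    have "\<forall>r\<in>B. poly f r \<noteq> 0 \<and> poly g r \<noteq> 0" using B(3) that poly_nonzero_if_dvd by blast
    then show ?thesis using B(2) omega_nest_Fract_eq_val[OF N B(1) _ B(2)] by blast
  qed
  then show ?thesis using that by blast
qed

lemma omega_nest_mult:
  assumes N: "N \<in> nests_inf v" and "a \<noteq> 0" "b \<noteq> 0"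
  shows "omega_nest v N (a * b) = omega_nest v N a + omega_nest v N b"
proof -
  obtain f g where fg: "f \<noteq> 0" "g \<noteq> 0" "a = Fract f g" using fract_nonzero_cases[OF assms(2)] .
  obtain f' g' where fg': "f' \<noteq> 0" "g' \<noteq> 0" "b = Fract f' g'" using fract_nonzero_cases[OF assms(3)] .
  have "f * g * f' * g' \<noteq> 0" using fg fg' by simp
  then obtain c where c: "\<And>p r. p dvd f * g * f' * g' \<Longrightarrow> r dvd f * g * f' * g' \<Longrightarrow>
      poly p c \<noteq> 0 \<and> poly r c \<noteq> 0 \<and> omega_nest v N (Fract p r) = v (poly p c / poly r c)"
    using omega_nest_eval_point[OF N] by blast
  have ev: "omega_nest v N a = v (poly f c / poly g c)" "omega_nest v N b = v (poly f' c / poly g' c)"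
    "omega_nest v N (a * b) = v (poly (f * f') c / poly (g * g') c)"
    using c[of f g] c[of f' g'] c[of "f * f'" "g * g'"] fg fg' by (simp_all add: algebra_simps)
  have nz: "poly f c \<noteq> 0" "poly g c \<noteq> 0" "poly f' c \<noteq> 0" "poly g' c \<noteq> 0"
    using c[of f g] c[of f' g'] by auto
  show ?thesis using nz by (simp add: ev val_mult[symmetric] field_simps)
qed

lemma omega_nest_add_ge_min:
  assumes N: "N \<in> nests_inf v" and "a \<noteq> 0" "b \<noteq> 0" "a + b \<noteq> 0"
  shows "min (omega_nest v N a) (omega_nest v N b) \<le> omega_nest v N (a + b)"
proof -
  obtain f g where fg: "f \<noteq> 0" "g \<noteq> 0" "a = Fract f g" using fract_nonzero_cases[OF assms(2)] .
  obtain f' g' where fg': "f' \<noteq> 0" "g' \<noteq> 0" "b = Fract f' g'" using fract_nonzero_cases[OF assms(3)] .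
  define h where "h = f * g' + f' * g"
  have ab: "a + b = Fract h (g * g')" using fg fg' by (simp add: h_def)
  then have "h \<noteq> 0" using assms(4) by (auto simp: fract_collapse)
  then have "f * g * f' * g' * h \<noteq> 0" using fg fg' by simp
  then obtain c where c: "\<And>p r. p dvd f * g * f' * g' * h \<Longrightarrow> r dvd f * g * f' * g' * h \<Longrightarrow>
      poly p c \<noteq> 0 \<and> poly r c \<noteq> 0 \<and> omega_nest v N (Fract p r) = v (poly p c / poly r c)"
    using omega_nest_eval_point[OF N] by blast
  have ev: "omega_nest v N a = v (poly f c / poly g c)" "omega_nest v N b = v (poly f' c / poly g' c)"
    "omega_nest v N (a + b) = v (poly h c / poly (g * g') c)"
    using c[of f g] c[of f' g'] c[of h "g * g'"] fg fg' ab by (simp_all add: algebra_simps)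
  have nz: "poly f c \<noteq> 0" "poly g c \<noteq> 0" "poly f' c \<noteq> 0" "poly g' c \<noteq> 0" "poly h c \<noteq> 0"
    using c[of f g] c[of f' g'] c[of h g] by auto
  have "poly h c / poly (g * g') c = poly f c / poly g c + poly f' c / poly g' c"
    using nz by (simp add: h_def field_simps)
  moreover have "poly h c / poly (g * g') c \<noteq> 0" using nz by simp
  ultimately show ?thesis using nz ev by (simp add: val_add_ge_min)
qed

lemma omega_nest_is_valuation: "N \<in> nests_inf v \<Longrightarrow> is_valuation (omega_nest v N)"
  unfolding is_valuation_def
  by (simp add: omega_nest_mult omega_nest_add_ge_min) (simp add: omega_nest_def)

lemma omega_nest_const_fract:
  assumes N: "N \<in> nests_inf v"
  shows "omega_nest v N (const_fract c) = v c"
proof (cases "c = 0")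
  case False
  then obtain B b where B: "B \<in> N" "b \<in> B" "\<forall>r\<in>B. poly [:c:] r \<noteq> 0"
    using nest_root_free_ball[OF N, of "[:c:]"] by auto
  then show ?thesis using omega_nest_Fract_eq_val[OF N B(1) _ B(2), of "[:c:]" 1]
    by (simp add: const_fract_def)
qed (simp add: omega_nest_def)

lemma omega_nest_value_group:
  assumes N: "N \<in> nests_inf v" and "\<delta> \<in> value_group (omega_nest v N)"
  shows "\<delta> \<in> value_group v"
proof -
  obtain q where q: "q \<noteq> 0" "omega_nest v N q = \<delta>"
    using assms(2) by (auto simp: mem_value_group_iff)
  obtain f g where fg: "f \<noteq> 0" "g \<noteq> 0" "q = Fract f g" using fract_nonzero_cases[OF q(1)] .
  then have "f * g \<noteq> 0" by simp
  then obtain c where c: "\<And>p r. p dvd f * g \<Longrightarrow> r dvd f * g \<Longrightarrow>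
      poly p c \<noteq> 0 \<and> poly r c \<noteq> 0 \<and> omega_nest v N (Fract p r) = v (poly p c / poly r c)"
    using omega_nest_eval_point[OF N] by blast
  then have "poly f c / poly g c \<noteq> 0" "v (poly f c / poly g c) = \<delta>"
    using c[of f g] q fg by auto
  then show ?thesis unfolding mem_value_group_iff by blast
qed

text \<open>The residue of \<open>q = f/g\<close> is that of \<open>e = f(b)/g(b)\<close>: at a deeper point \<open>b'\<close>,
  \<open>(f/g)(b') = e u\<close> with \<open>u\<close> a principal unit.\<close>

lemma omega_nest_residue_algebraic:
  assumes N: "N \<in> nests_inf v" and q: "0 \<le> omega_nest v N q"
  shows "residue_algebraic v (omega_nest v N) q"
proof (cases "q = 0")
  case True
  then show ?thesis by (intro residue_algebraic_linear[of 0]) simp_all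
next
  case False
  then obtain f g where fg: "f \<noteq> 0" "g \<noteq> 0" "q = Fract f g" by (rule fract_nonzero_cases)
  then obtain B0 b where B0: "B0 \<in> N" "b \<in> B0" "\<forall>r\<in>B0. poly (f * g) r \<noteq> 0"
    using nest_root_free_ball[OF N, of "f * g"] by auto
  obtain \<gamma>0 where B0b: "B0 = cball_v v b \<gamma>0" using nest_ball_recenter[OF N B0(1,2)] by blast
  define e where "e = poly f b / poly g b"
  have e: "e \<noteq> 0" "v e = omega_nest v N q"
    using B0 omega_nest_Fract_eq_val[OF N B0(1) _ B0(2), of f g] by (auto simp: e_def fg(3))
  define h where "h = f - smult e g"
  have diff: "q - const_fract e = Fract h g"
    using fg by (simp add: h_def const_fract_def)
  have "Fract h g = 0 \<or> 0 < omega_nest v N (Fract h g)"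
  proof (cases "h = 0")
    case False
    then obtain B1 where B1: "B1 \<in> N" "\<forall>r\<in>B1. poly (h * g) r \<noteq> 0"
      using nest_root_free_ball[OF N, of "h * g"] fg(2) by auto
    obtain b' where b': "b' \<in> B0" "b' \<in> B1" using nest_common_point[OF N B0(1) B1(1)] .
    define u where "u = (poly f b' / poly f b) / (poly g b' / poly g b)"
    have "principal_unit u"
      unfolding u_def using B0(3) b'(1) B0b
      by (intro principal_unit_divide principal_unit_poly_ratio) auto
    moreover have hg: "poly h b' / poly g b' = e * (u - 1)"
      using B0(2,3) b'(1) by (auto simp: h_def e_def u_def field_simps)
    moreover have "poly h b' / poly g b' \<noteq> 0" using B1(2) b'(2) by simp
    ultimately have "0 < v (poly h b' / poly g b')"
      using e q by (auto simp: principal_unit_def val_gt_def val_mult add_nonneg_pos)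
    moreover have "omega_nest v N (Fract h g) = v (poly h b' / poly g b')"
      using B1 b'(2) by (intro omega_nest_Fract_eq_val[OF N B1(1)]) auto
    ultimately show ?thesis by simp
  qed (simp add: fract_collapse)
  then show ?thesis using e q diff by (intro residue_algebraic_linear[of e]) simp_all
qed

lemma omega_nest_mem_V_inf: "N \<in> nests_inf v \<Longrightarrow> omega_nest v N \<in> V_inf v"
  unfolding mem_V_inf_iff
  using omega_nest_value_group
  by (auto simp: omega_nest_is_valuation omega_nest_const_fract omega_nest_residue_algebraic
      intro!: exI[of _ "Suc 0"])

section \<open>Equivalent nests\<close>

lemma omega_nest_linear_factor:
  assumes N: "N \<in> nests_inf v" and B: "B \<in> N" "a \<notin> B" and b: "b \<in> B"
  shows "omega_nest v N (Fract [:-a, 1:] 1) = v (b - a)"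
proof -
  have "\<forall>r\<in>B. poly [:-a, 1:] r \<noteq> 0 \<and> poly 1 r \<noteq> 0" using B(2) by auto
  then show ?thesis using omega_nest_Fract_eq_val[OF N B(1) _ b] by simp
qed

lemma nest_cofinal_if_linear_factors_eq:
  assumes N: "N \<in> nests_inf v" and M: "M \<in> nests_inf v"
    and eq: "\<And>a. omega_nest v N (Fract [:-a, 1:] 1) = omega_nest v M (Fract [:-a, 1:] 1)"
    and B: "B \<in> N"
  shows "\<exists>C\<in>M. C \<subseteq> B"
proof -
  obtain a \<gamma> where B_eq: "B = cball_v v a \<gamma>" using nests_infD(2)[OF N B] by blast
  obtain B0 b where B0: "B0 \<in> N" "b \<in> B0" "\<forall>r\<in>B0. poly [:-a, 1:] r \<noteq> 0"
    using nest_root_free_ball[OF N, of "[:-a, 1:]"] by auto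
  have a: "a \<notin> B0" using B0(3) by auto
  then have "B0 \<subseteq> B" using nests_infD(3)[OF N B B0(1)] B_eq center_mem_cball_v by blast
  then have "\<gamma> \<le> v (b - a)" using B0(2) a B_eq by (auto simp: cball_v_def)
  also have "v (b - a) = omega_nest v M (Fract [:-a, 1:] 1)"
    using omega_nest_linear_factor[OF N B0(1) a B0(2)] eq by simp
  finally have \<gamma>: "\<gamma> \<le> omega_nest v M (Fract [:-a, 1:] 1)" .
  obtain C c where C: "C \<in> M" "c \<in> C" "\<forall>r\<in>C. poly [:-a, 1:] r \<noteq> 0"
    using nest_root_free_ball[OF M, of "[:-a, 1:]"] by auto
  have "C \<subseteq> B"
  proof
    fix r assume "r \<in> C"
    then have "omega_nest v M (Fract [:-a, 1:] 1) = v (r - a)"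
      using C by (intro omega_nest_linear_factor[OF M C(1)]) auto
    then show "r \<in> B" using \<gamma> B_eq by (simp add: cball_v_def)
  qed
  then show ?thesis using C(1) by blast
qed

lemma nest_equiv_iff_linear_factors_eq:
  assumes N: "N \<in> nests_inf v" and M: "M \<in> nests_inf v"
  shows "(N, M) \<in> nest_equiv v \<longleftrightarrow>
    (\<forall>a. omega_nest v N (Fract [:-a, 1:] 1) = omega_nest v M (Fract [:-a, 1:] 1))"
proof
  assume NM: "(N, M) \<in> nest_equiv v"
  show "\<forall>a. omega_nest v N (Fract [:-a, 1:] 1) = omega_nest v M (Fract [:-a, 1:] 1)"
  proof
    fix a
    obtain B b where B: "B \<in> N" "b \<in> B" "\<forall>r\<in>B. poly [:-a, 1:] r \<noteq> 0"
      using nest_root_free_ball[OF N, of "[:-a, 1:]"] by auto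
    obtain C where C: "C \<in> M" "C \<subseteq> B" using NM B(1) by (auto simp: nest_equiv_def)
    obtain C0 b' where C0: "C0 \<in> M" "b' \<in> C0" "\<forall>r\<in>C0. poly [:-a, 1:] r \<noteq> 0"
      using nest_root_free_ball[OF M, of "[:-a, 1:]"] by auto
    obtain c where c: "c \<in> C" "c \<in> C0" using nest_common_point[OF M C(1) C0(1)] .
    have "a \<notin> B" "a \<notin> C0" using B(3) C0(3) by auto
    then have "omega_nest v N (Fract [:-a, 1:] 1) = v (c - a)"
      "omega_nest v M (Fract [:-a, 1:] 1) = v (c - a)"
      using omega_nest_linear_factor[OF N B(1)] omega_nest_linear_factor[OF M C0(1)] c C(2)
      by auto
    then show "omega_nest v N (Fract [:-a, 1:] 1) = omega_nest v M (Fract [:-a, 1:] 1)" by simp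
  qed
next
  assume "\<forall>a. omega_nest v N (Fract [:-a, 1:] 1) = omega_nest v M (Fract [:-a, 1:] 1)"
  then show "(N, M) \<in> nest_equiv v"
    using nest_cofinal_if_linear_factors_eq[OF N M] nest_cofinal_if_linear_factors_eq[OF M N] N M
    by (auto simp: nest_equiv_def)
qed

lemma omega_nest_eq_iff_nest_equiv:
  assumes N: "N \<in> nests_inf v" and M: "M \<in> nests_inf v"
  shows "omega_nest v N = omega_nest v M \<longleftrightarrow> (N, M) \<in> nest_equiv v"
  unfolding nest_equiv_iff_linear_factors_eq[OF N M]
proof
  assume "\<forall>a. omega_nest v N (Fract [:-a, 1:] 1) = omega_nest v M (Fract [:-a, 1:] 1)"
  then show "omega_nest v N = omega_nest v M"
    using omega_nest_const_fract[OF N] omega_nest_const_fract[OF M]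
    by (intro valuation_eqI_linear_factors omega_nest_is_valuation N M) simp_all
qed simp

lemma equiv_nest_equiv: "equiv (nests_inf v) (nest_equiv v)"
proof -
  have "nest_equiv v = {(N, M). N \<in> nests_inf v \<and> M \<in> nests_inf v \<and> omega_nest v N = omega_nest v M}"
    using omega_nest_eq_iff_nest_equiv by (auto simp: nest_equiv_def)
  then show ?thesis by (intro equivI refl_onI symI transI) auto
qed

end

section \<open>Surjectivity\<close>

locale V_inf_element =
  alg_closed_valuation v for v :: "'a::alg_closed_field \<Rightarrow> 'g::linordered_ab_group_add" +
  fixes w :: "'a poly fract \<Rightarrow> 'g"
  assumes w_mem_V_inf: "w \<in> V_inf v"
begin

sublocale W: valuation w
  using w_mem_V_inf by unfold_locales (simp add: mem_V_inf_iff)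

lemma w_const_fract [simp]: "w (const_fract c) = v c"
  using w_mem_V_inf by (simp add: mem_V_inf_iff)

text \<open>\<open>wdist a = w(x - a)\<close> measures how close the generic point \<open>x\<close> comes to \<open>a\<close>.\<close>

definition wdist :: "'a \<Rightarrow> 'g" where
  "wdist a = w (Fract [:-a, 1:] 1)"

lemma wdist_in_value_group: "wdist a \<in> value_group v"
proof -
  have "wdist a \<in> value_group w" by (auto simp: wdist_def value_group_def)
  then obtain n where "n > 0" "nmult n (wdist a) \<in> value_group v"
    using w_mem_V_inf by (auto simp: mem_V_inf_iff)
  then show ?thesis by (rule value_group_root)
qed

lemma Fract_linear_shift: "Fract [:-b, 1:] 1 = Fract [:-a, 1:] 1 + const_fract (a - b)"
  by (simp add: const_fract_def)

lemma wdist_ge_min: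
  assumes "a \<noteq> b"
  shows "min (wdist a) (v (a - b)) \<le> wdist b"
proof -
  have "Fract [:-a, 1:] 1 \<noteq> 0" "const_fract (a - b) \<noteq> 0"
    "Fract [:-a, 1:] 1 + const_fract (a - b) \<noteq> 0"
    using assms by (simp_all add: const_fract_def flip: Fract_linear_shift)
  then have "min (w (Fract [:-a, 1:] 1)) (w (const_fract (a - b)))
      \<le> w (Fract [:-a, 1:] 1 + const_fract (a - b))"
    by (rule W.val_add_ge_min)
  then show ?thesis by (simp add: wdist_def flip: Fract_linear_shift)
qed

lemma wdist_eq_if_less:
  assumes "a \<noteq> b" "v (a - b) < wdist a"
  shows "wdist b = v (a - b)"
proof -
  have "const_fract (a - b) \<noteq> 0" using assms(1) by (simp add: const_fract_def)
  moreover have "W.val_gt (Fract [:-a, 1:] 1) (w (const_fract (a - b)))"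
    using assms(2) by (simp add: W.val_gt_def wdist_def)
  ultimately show ?thesis
    using W.val_add_eq_if_val_gt Fract_linear_shift[of b a] by (simp add: wdist_def add.commute)
qed

lemma cball_wdist_subset:
  assumes "wdist a \<le> wdist b"
  shows "cball_v v b (wdist b) \<subseteq> cball_v v a (wdist a)"
proof (cases "a = b")
  case False
  have "wdist a \<le> v (a - b)"
  proof (rule ccontr)
    assume "\<not> wdist a \<le> v (a - b)"
    then have "v (a - b) < wdist a" by simp
    moreover from this have "wdist b = v (a - b)" by (rule wdist_eq_if_less[OF False])
    ultimately show False using assms by simp
  qed
  then have "b \<in> cball_v v a (wdist a)" by (simp add: cball_v_def val_minus_commute)
  then have "cball_v v a (wdist a) = cball_v v b (wdist a)" by (rule cball_v_recenter[symmetric])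
  then show ?thesis using assms by (auto simp: cball_v_def intro: order.trans)
qed (use assms in \<open>auto simp: cball_v_def intro: order.trans\<close>)

lemma wdist_eq_min_if_max:
  assumes max: "\<And>a. wdist a \<le> wdist c"
  shows "wdist a = (if a = c then wdist c else min (wdist c) (v (c - a)))"
proof (cases "a = c")
  case False
  show ?thesis
  proof (cases "v (c - a) < wdist c")
    case True
    then have "wdist a = v (c - a)" using wdist_eq_if_less[of c a] False by simp
    then show ?thesis using True False by (auto simp: min_def)
  next
    case ge: False
    then have "wdist c \<le> wdist a" using wdist_ge_min[of c a] False by (simp add: min_def not_less)
    then have "wdist a = wdist c" using max[of a] by (rule antisym[rotated])
    then show ?thesis using ge False by (simp add: min_def not_less)
  qed
qed simp

lemma w_eq_omega_center_if_max:
  assumes max: "\<And>a. wdist a \<le> wdist c"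
  shows "w (Fract F 1) = omega_center v c (wdist c) F"
proof (cases "F = 0")
  case False
  then show ?thesis
  proof (induction F rule: alg_closed_poly_induct)
    case (const e)
    then show ?case using w_const_fract[of e] by (simp add: const_fract_def)
  next
    case (linear_factor a R)
    have prod: "Fract ([:-a, 1:] * R) 1 = Fract [:-a, 1:] 1 * Fract R 1" by simp
    have nz: "Fract [:-a, 1:] 1 \<noteq> 0" "Fract R 1 \<noteq> 0" using linear_factor by simp_all
    have "w (Fract [:-a, 1:] 1) = (if a = c then wdist c else min (wdist c) (v (c - a)))"
      using wdist_eq_min_if_max[OF max, of a] by (simp only: wdist_def)
    then show ?case
      unfolding prod W.val_mult[OF nz] omega_center_linear_factor[OF linear_factor.hyps(1)]
      using linear_factor.IH by (simp only:)
  qed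
qed (simp add: fract_collapse omega_center_def)

lemma wdist_unbounded: "\<exists>a. wdist c < wdist a"
proof (rule ccontr)
  assume "\<nexists>a. wdist c < wdist a"
  then have max: "\<And>a. wdist a \<le> wdist c" by (simp add: not_less)
  obtain d where d: "d \<noteq> 0" "v d = wdist c"
    using wdist_in_value_group[of c] by (auto simp: mem_value_group_iff)
  define e where "e = inverse d"
  have e: "e \<noteq> 0" "v e = - wdist c" using d by (simp_all add: e_def val_inverse)
  define q where "q = Fract (smult e [:-c, 1:]) 1"
  have "q = const_fract e * Fract [:-c, 1:] 1" by (simp add: q_def const_fract_def mult.commute)
  moreover have "const_fract e \<noteq> 0" "Fract [:-c, 1:] 1 \<noteq> 0"
    using e(1) by (simp_all add: const_fract_eq_0_iff)
  ultimately have "w q = 0" using e(2) by (simp add: W.val_mult wdist_def)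
  then have "residue_algebraic v w q" using w_mem_V_inf by (simp add: mem_V_inf_iff)
  then obtain cc n where cc: "\<forall>i\<le>n. cc i = 0 \<or> 0 \<le> v (cc i)" "\<exists>i\<le>n. cc i \<noteq> 0 \<and> v (cc i) = 0"
    and s: "(\<Sum>i\<le>n. const_fract (cc i) * q ^ i) = 0 \<or> 0 < w (\<Sum>i\<le>n. const_fract (cc i) * q ^ i)"
    unfolding residue_algebraic_def Let_def by blast
  define F where "F = (\<Sum>i\<le>n. [:cc i:] * smult e [:-c, 1:] ^ i)"
  have sF: "(\<Sum>i\<le>n. const_fract (cc i) * q ^ i) = Fract F 1"
    by (simp add: F_def q_def const_fract_def Fract_power_1 Fract_sum_1)
  obtain i0 where i0: "i0 \<le> n" "cc i0 \<noteq> 0" "v (cc i0) = 0" using cc(2) by blast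
  note F = omega_center_scaled_power_sum[OF e cc(1) i0, where a = c, folded F_def]
  have "w (Fract F 1) = 0" using w_eq_omega_center_if_max[OF max, of F] F(2) by simp
  then show False using s F(1) by (simp add: sF)
qed

definition wnest :: "'a set set" where
  "wnest = range (\<lambda>a. cball_v v a (wdist a))"

lemma wnest_mem_nests_inf: "wnest \<in> nests_inf v"
  unfolding nests_inf_def
proof (intro CollectI conjI ballI)
  show "wnest \<noteq> {}" by (simp add: wnest_def)
next
  fix B assume "B \<in> wnest"
  then show "is_closed_ball v B"
    using wdist_in_value_group by (auto simp: wnest_def is_closed_ball_def)
next
  fix B C assume "B \<in> wnest" "C \<in> wnest"
  then obtain a b where "B = cball_v v a (wdist a)" "C = cball_v v b (wdist b)"
    by (auto simp: wnest_def)
  then show "B \<subseteq> C \<or> C \<subseteq> B" using cball_wdist_subset le_cases by metis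
next
  show "\<Inter> wnest = {}"
  proof (rule ccontr)
    assume "\<Inter> wnest \<noteq> {}"
    then obtain c where c: "\<And>a. c \<in> cball_v v a (wdist a)" by (auto simp: wnest_def)
    have "wdist a \<le> wdist c" for a
    proof (cases "a = c")
      case False
      then have "wdist a \<le> v (a - c)" using c[of a] by (simp add: cball_v_def val_minus_commute)
      then show ?thesis using wdist_ge_min[OF False] by (simp add: min_def)
    qed simp
    then show False using wdist_unbounded[of c] by (auto simp: not_less[symmetric])
  qed
qed

lemma omega_nest_wnest_linear_factor: "omega_nest v wnest (Fract [:-a, 1:] 1) = wdist a"
proof -
  obtain B b where B: "B \<in> wnest" "b \<in> B" "\<forall>r\<in>B. poly [:-a, 1:] r \<noteq> 0"
    using nest_root_free_ball[OF wnest_mem_nests_inf, of "[:-a, 1:]"] by auto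
  obtain e where e: "B = cball_v v e (wdist e)" using B(1) by (auto simp: wnest_def)
  have a: "a \<notin> B" using B(3) by auto
  then have "e \<noteq> a" "v (e - a) < wdist e" using e by (auto simp: cball_v_def val_minus_commute)
  then have "wdist a = v (e - a)" by (rule wdist_eq_if_less)
  also have "\<dots> = omega_nest v wnest (Fract [:-a, 1:] 1)"
    using omega_nest_linear_factor[OF wnest_mem_nests_inf B(1) a, of e] e by simp
  finally show ?thesis by simp
qed

lemma omega_nest_wnest: "omega_nest v wnest = w"
  using omega_nest_const_fract[OF wnest_mem_nests_inf] omega_nest_wnest_linear_factor
  by (intro valuation_eqI_linear_factors omega_nest_is_valuation wnest_mem_nests_inf W.is_valuation)
    (simp_all add: wdist_def)

end

lemma omega_nest_surj:
  fixes v :: "'a::alg_closed_field \<Rightarrow> 'g::linordered_ab_group_add"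
  assumes "is_valuation v" "w \<in> V_inf v"
  shows "\<exists>N\<in>nests_inf v. omega_nest v N = w"
proof -
  interpret V_inf_element v w using assms by unfold_locales
  show ?thesis using wnest_mem_nests_inf omega_nest_wnest by blast
qed

theorem theorem2p2:
  fixes v :: "'a::alg_closed_field \<Rightarrow> 'g::linordered_ab_group_add"
  assumes "is_valuation v"
  shows "(\<forall>N\<in>nests_inf v. omega_nest v N \<in> V_inf v)
       \<and> (\<forall>N M. (N, M) \<in> nest_equiv v \<longrightarrow> omega_nest v N = omega_nest v M)
       \<and> bij_betw (\<lambda>X. omega_nest v (SOME N. N \<in> X)) (nests_inf v // nest_equiv v) (V_inf v)"
proof -
  interpret alg_closed_valuation v by unfold_locales (rule assms)
  have well_defined: "omega_nest v N = omega_nest v M" if "(N, M) \<in> nest_equiv v" for N M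
    using that omega_nest_eq_iff_nest_equiv by (simp add: nest_equiv_def)
  have "bij_betw (\<lambda>X. omega_nest v (SOME N. N \<in> X)) (nests_inf v // nest_equiv v) (V_inf v)"
    using equiv_nest_equiv omega_nest_mem_V_inf omega_nest_eq_iff_nest_equiv omega_nest_surj[OF assms]
    by (rule bij_betw_quotient_SOME)
  then show ?thesis using omega_nest_mem_V_inf well_defined by blast
qed

end
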